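(* Let $n>0$, $a\in\mathbb R$ and $b>0$, and let $f(u)=a(b^2+u^2)^{-n}$. Then $$(f\star f)(u)=\frac{n a^2\kappa_{n+1}}{b^{2n-1}(b^2+u^2)^{n+1}}.$$ Consequently, for $b_0>0$, the family $f_\lambda(u)=a(b_\lambda^2+u^2)^{-n}$ with $$b_\lambda=b_0\left(1-\frac{(2n+1)\kappa_{n+1}a\lambda}{2b_0^{2n+1}}\right)^{1/(2n+1)}$$ solves the flow equation $\frac{d f_\lambda}{d\lambda}=f_\lambda\star f_\lambda$ with $f_0=a(b_0^2+u^2)^{-n}$, for all $\lambda$ for which the bracket is positive.
   Context: For suitable real functions $f$ on $\mathbb R$, the star product is $$(f\star f)(u)=\int_{-\infty}^\infty\frac{f(w)f'(u)-f'(w)f(u)}{2\pi(w-u)}\,dw.$$ The constants are $\kappa_m=\int_{-\infty}^\infty\frac{dx}{\pi(1+x^2)^m}=\frac{\Gamma(m-\frac12)}{\Gamma(m)\sqrt\pi}$. *)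

theory Defs
  imports "HOL-Analysis.Analysis"
begin

text \<open>Star product of a real function with itself:
  (f star f)(u) = integral over R of (f(w) f'(u) - f'(w) f(u)) / (2 pi (w - u)) dw.
  The integrand at the single point w = u is irrelevant (null set).\<close>
definition star_self :: "(real \<Rightarrow> real) \<Rightarrow> real \<Rightarrow> real" where
  "star_self f u = integral UNIV (\<lambda>w. (f w * deriv f u - deriv f w * f u) / (2 * pi * (w - u)))"

definition kappa :: "real \<Rightarrow> real" where
  "kappa m = integral UNIV (\<lambda>x. 1 / (pi * (1 + x\<^sup>2) powr m))"

end

theory Submission
  imports Defs "HOL-Probability.Sinc_Integral"
begin

text \<open>Write \<open>P(w) = b^2 + w^2\<close>. Since \<open>u P(w) - w P(u) = (w - u) (u w - b^2)\<close>, the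
  factor \<open>w - u\<close> cancels from the star integrand, which becomes
  \<open>n a^2 / \<pi> \<cdot> P(u)^(-n-1) \<cdot> (b^2 - u w) P(w)^(-n-1)\<close>. The part \<open>u w P(w)^(-n-1)\<close> is odd
  and integrates to zero, and the substitution \<open>w = b x\<close> turns \<open>\<integral> P(w)^(-n-1) dw\<close> into
  \<open>\<pi> \<kappa>(n+1) b^(-2n-1)\<close>. For the flow, \<open>b\<^sub>\<lambda>^(2n+1)\<close> is affine in \<open>\<lambda>\<close>, so
  \<open>b\<^sub>\<lambda>' = -\<kappa>(n+1) a / (2 b\<^sub>\<lambda>^(2n))\<close>; multiplied by \<open>\<partial>\<^sub>b f = -2 n a b P^(-n-1)\<close> this is
  the star formula at \<open>b = b\<^sub>\<lambda>\<close>.\<close>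

lemma integrable_one_plus_square_powr:
  fixes p :: real
  assumes "p \<ge> 1"
  shows "integrable lborel (\<lambda>x::real. (1 + x\<^sup>2) powr (-p))"
proof (rule Bochner_Integration.integrable_bound)
  show "integrable lborel (\<lambda>x::real. inverse (1 + x\<^sup>2))"
    using integrable_inverse_1_plus_square by (simp add: set_integrable_def)
  show "AE x in lborel. norm ((1 + x\<^sup>2) powr (-p)) \<le> norm (inverse (1 + (x::real)\<^sup>2))"
  proof (rule AE_I2)
    fix x :: real
    have "(1 + x\<^sup>2) powr (-p) \<le> (1 + x\<^sup>2) powr (-1)"
      by (rule powr_mono) (use assms in auto)
    then show "norm ((1 + x\<^sup>2) powr (-p)) \<le> norm (inverse (1 + x\<^sup>2))"
      by (simp add: powr_minus_divide divide_inverse add_pos_nonneg)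
  qed
qed measurable

lemma kappa_eq_lborel_integral:
  assumes "p \<ge> 1"
  shows "kappa p = (LINT x|lborel. (1 + x\<^sup>2) powr (-p)) / pi"
proof -
  have "kappa p = integral UNIV (\<lambda>x. (1 + x\<^sup>2) powr (-p) / pi)"
    unfolding kappa_def by (simp add: powr_minus_divide mult.commute)
  also have "\<dots> = (LINT x|lborel. (1 + x\<^sup>2) powr (-p) / pi)"
    using integrable_one_plus_square_powr[OF assms] by (intro integral_lborel) simp
  finally show ?thesis by simp
qed

lemma
  fixes b p :: real
  assumes "p \<ge> 1" "b > 0"
  shows integrable_square_plus_square_powr: "integrable lborel (\<lambda>w::real. (b\<^sup>2 + w\<^sup>2) powr (-p))"
    and lborel_integral_square_plus_square_powr:
      "(LINT w|lborel. (b\<^sup>2 + w\<^sup>2) powr (-p)) = pi * kappa p * b powr (1 - 2*p)"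
proof -
  have scale: "(b\<^sup>2 + (0 + b*x)\<^sup>2) powr (-p) = b powr (-2*p) * (1 + x\<^sup>2) powr (-p)" for x
  proof -
    have "(b powr 2) powr (-p) = b powr (-2*p)"
      by (simp add: powr_powr)
    moreover have "b\<^sup>2 + (0 + b*x)\<^sup>2 = b powr 2 * (1 + x\<^sup>2)"
      using assms by (simp add: powr_numeral algebra_simps power_mult_distrib)
    ultimately show ?thesis
      using assms by (simp only: powr_mult)
  qed
  show "integrable lborel (\<lambda>w::real. (b\<^sup>2 + w\<^sup>2) powr (-p))"
    using lborel_integrable_real_affine_iff[of b "\<lambda>w. (b\<^sup>2 + w\<^sup>2) powr (-p)" 0]
      integrable_one_plus_square_powr[OF assms(1)] assms(2)
    unfolding scale by simp
  have "(LINT w|lborel. (b\<^sup>2 + w\<^sup>2) powr (-p)) = b * (b powr (-2*p) * (LINT x|lborel. (1 + x\<^sup>2) powr (-p)))"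
    using lborel_integral_real_affine[of b "\<lambda>w. (b\<^sup>2 + w\<^sup>2) powr (-p)" 0] assms(2)
    unfolding scale by simp
  also have "\<dots> = pi * kappa p * b powr (1 - 2*p)"
    using assms by (simp add: kappa_eq_lborel_integral powr_diff powr_minus field_simps)
  finally show "(LINT w|lborel. (b\<^sup>2 + w\<^sup>2) powr (-p)) = pi * kappa p * b powr (1 - 2*p)" .
qed

lemma has_real_derivative_plus_square_powr:
  fixes c p x :: real
  assumes "c + x\<^sup>2 > 0"
  shows "((\<lambda>x. (c + x\<^sup>2) powr (-p)) has_real_derivative -2 * p * x * (c + x\<^sup>2) powr (-p - 1)) (at x)"
  using assms by (auto intro!: derivative_eq_intros)

lemma lborel_integral_odd_eq_0:
  fixes f :: "real \<Rightarrow> real"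
  assumes "\<And>x. f (-x) = - f x"
  shows "(LINT x|lborel. f x) = 0"
proof -
  have "(LINT x|lborel. f x) = (LINT x|lborel. f (0 + -1 * x))"
    using lborel_integral_real_affine[of "-1" f 0] by simp
  also have "\<dots> = - (LINT x|lborel. f x)"
    using assms by simp
  finally show ?thesis by simp
qed

lemma integrable_odd_if_set_integrable_pos:
  fixes f :: "real \<Rightarrow> real"
  assumes odd: "\<And>x. f (-x) = - f x" and pos: "set_integrable lborel {0<..} f"
  shows "integrable lborel f"
proof -
  let ?g = "\<lambda>x. indicator {0<..} x * f x"
  have "integrable lborel ?g"
    using pos by (simp add: set_integrable_def)
  then have "integrable lborel (\<lambda>x. - ?g (0 + -1 * x))"
    by (intro integrable_minus lborel_integrable_real_affine) simp_all
  with \<open>integrable lborel ?g\<close> have "integrable lborel (\<lambda>x. ?g x + - ?g (0 + -1 * x))"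
    by (rule Bochner_Integration.integrable_add)
  moreover have "f 0 = 0"
    using odd[of 0] by simp
  then have "?g x + - ?g (0 + -1 * x) = f x" for x
    using odd[of x] by (cases x "0::real" rule: linorder_cases) (auto simp: indicator_def)
  ultimately show ?thesis
    by simp
qed

text \<open>Comparison with \<open>(1 + w^2)^(-1)\<close> does not cover \<open>n < 1/2\<close>; the antiderivative
  \<open>-P(w)^(-n) / (2n)\<close> does.\<close>

lemma set_integrable_pos_times_square_plus_square_powr:
  fixes b n :: real
  assumes "n > 0" "b > 0"
  shows "set_integrable lborel {0<..} (\<lambda>w. w * (b\<^sup>2 + w\<^sup>2) powr (-n - 1))"
proof -
  define F where "F w = - ((b\<^sup>2 + w\<^sup>2) powr (-n)) / (2*n)" for w :: real
  have pos: "b\<^sup>2 + x\<^sup>2 > 0" for x :: real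
    using assms by (simp add: add_pos_nonneg)
  have "DERIV F x :> x * (b\<^sup>2 + x\<^sup>2) powr (-n - 1)" for x
    unfolding F_def using assms pos[of x] has_real_derivative_plus_square_powr[OF pos[of x], of n]
    by (auto intro!: derivative_eq_intros)
  moreover have "(F \<longlongrightarrow> F 0) (at_right 0)"
    unfolding F_def using pos[of 0] assms by (intro tendsto_intros) auto
  moreover have "((\<lambda>w. (b\<^sup>2 + w\<^sup>2) powr (-n)) \<longlongrightarrow> 0) at_top"
    using assms by (auto intro!: tendsto_neg_powr filterlim_tendsto_add_at_top[OF tendsto_const]
        filterlim_pow_at_top filterlim_ident)
  then have "(F \<longlongrightarrow> 0) at_top"
    unfolding F_def using tendsto_divide[OF tendsto_minus tendsto_const, of _ 0 at_top "2*n"] assms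
    by simp
  moreover have "isCont (\<lambda>w. w * (b\<^sup>2 + w\<^sup>2) powr (-n - 1)) x" for x
    using pos[of x] by (intro continuous_intros) auto
  ultimately show ?thesis
    using interval_integral_FTC_nonneg(1)[of 0 \<infinity> F "\<lambda>w. w * (b\<^sup>2 + w\<^sup>2) powr (-n - 1)" "F 0" 0]
    by (auto simp: zero_ereal_def ereal_tendsto_simps)
qed

lemma star_integrand_factorization:
  fixes a b n u w :: real
  assumes "b > 0" "w \<noteq> u"
  defines "f \<equiv> \<lambda>x. a * (b\<^sup>2 + x\<^sup>2) powr (-n)"
  shows "(f w * deriv f u - deriv f w * f u) / (2 * pi * (w - u))
       = n * a\<^sup>2 / pi * (b\<^sup>2 + u\<^sup>2) powr (-n - 1) * ((b\<^sup>2 - u * w) * (b\<^sup>2 + w\<^sup>2) powr (-n - 1))"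
proof -
  have pos: "b\<^sup>2 + x\<^sup>2 > 0" for x
    using assms(1) by (simp add: add_pos_nonneg)
  have deriv_f: "deriv f x = a * (-2 * n * x * (b\<^sup>2 + x\<^sup>2) powr (-n - 1))" for x
    unfolding f_def
    by (intro DERIV_imp_deriv DERIV_cmult has_real_derivative_plus_square_powr pos)
  have f_eq: "f x = a * ((b\<^sup>2 + x\<^sup>2) * (b\<^sup>2 + x\<^sup>2) powr (-n - 1))" for x
    using pos[of x] by (simp add: f_def powr_mult_base less_imp_le)
  show ?thesis
    unfolding deriv_f f_eq using assms(2)
    by (simp add: field_simps power2_eq_square)
qed

lemma
  fixes b n :: real
  assumes "n > 0" "b > 0"
  shows integrable_times_square_plus_square_powr:
      "integrable lborel (\<lambda>w. w * (b\<^sup>2 + w\<^sup>2) powr (-n - 1))"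
    and lborel_integral_times_square_plus_square_powr:
      "(LINT w|lborel. w * (b\<^sup>2 + w\<^sup>2) powr (-n - 1)) = 0"
  by (auto intro: integrable_odd_if_set_integrable_pos lborel_integral_odd_eq_0
      set_integrable_pos_times_square_plus_square_powr[OF assms])

theorem star_self_power_of_square_plus_square:
  fixes a b n u :: real
  assumes "n > 0" "b > 0"
  shows "star_self (\<lambda>x. a * (b\<^sup>2 + x\<^sup>2) powr (-n)) u
       = n * a\<^sup>2 * kappa (n + 1) / (b powr (2 * n - 1) * (b\<^sup>2 + u\<^sup>2) powr (n + 1))"
proof -
  define C where "C = n * a\<^sup>2 / pi * (b\<^sup>2 + u\<^sup>2) powr (-n - 1)"
  define Q where "Q w = (b\<^sup>2 + w\<^sup>2) powr (-n - 1)" for w :: real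
  have "star_self (\<lambda>x. a * (b\<^sup>2 + x\<^sup>2) powr (-n)) u = integral UNIV (\<lambda>w. C * ((b\<^sup>2 - u * w) * Q w))"
    unfolding star_self_def C_def Q_def
    by (rule integral_spike[of "{u}"]) (auto simp: star_integrand_factorization[OF assms(2)])
  also have "\<dots> = C * (b\<^sup>2 * (LINT w|lborel. Q w) - u * (LINT w|lborel. w * Q w))"
  proof -
    have int: "integrable lborel (\<lambda>w. Q w)" "integrable lborel (\<lambda>w. w * Q w)"
      using integrable_square_plus_square_powr[of "n + 1" b]
        integrable_times_square_plus_square_powr[OF assms] assms
      by (simp_all add: Q_def)
    have "(\<lambda>w. C * ((b\<^sup>2 - u * w) * Q w)) = (\<lambda>w. C * b\<^sup>2 * Q w - C * u * (w * Q w))"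
      by (simp add: algebra_simps)
    then have "integral UNIV (\<lambda>w. C * ((b\<^sup>2 - u * w) * Q w))
        = (LINT w|lborel. C * b\<^sup>2 * Q w - C * u * (w * Q w))"
      using int by (simp add: integral_lborel)
    also have "\<dots> = C * (b\<^sup>2 * (LINT w|lborel. Q w) - u * (LINT w|lborel. w * Q w))"
      using int by (simp add: right_diff_distrib mult.assoc)
    finally show ?thesis .
  qed
  also have "\<dots> = C * b\<^sup>2 * pi * kappa (n + 1) * b powr (1 - 2 * (n + 1))"
  proof -
    have "(LINT w|lborel. Q w) = pi * kappa (n + 1) * b powr (1 - 2 * (n + 1))"
      unfolding Q_def using lborel_integral_square_plus_square_powr[of "n + 1" b] assms
      by simp
    moreover have "(LINT w|lborel. w * Q w) = 0"
      unfolding Q_def by (rule lborel_integral_times_square_plus_square_powr[OF assms])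
    ultimately show ?thesis
      by simp
  qed
  also have "\<dots> = n * a\<^sup>2 * kappa (n + 1) / (b powr (2 * n - 1) * (b\<^sup>2 + u\<^sup>2) powr (n + 1))"
  proof -
    have "2 + (1 - 2 * (n + 1)) = - (2 * n - 1)"
      by simp
    then have "b\<^sup>2 * b powr (1 - 2 * (n + 1)) = b powr (- (2 * n - 1))"
      using assms(2) powr_add[of b 2 "1 - 2 * (n + 1)"] by (simp only: powr_numeral)
    then have "b\<^sup>2 * b powr (1 - 2 * (n + 1)) = 1 / b powr (2 * n - 1)"
      by (metis powr_minus_divide)
    moreover have "(b\<^sup>2 + u\<^sup>2) powr (-n - 1) = 1 / (b\<^sup>2 + u\<^sup>2) powr (n + 1)"
      using powr_minus_divide[of "b\<^sup>2 + u\<^sup>2" "n + 1"] by simp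
    moreover have "C * b\<^sup>2 * pi * kappa (n + 1) * b powr (1 - 2 * (n + 1))
        = n * a\<^sup>2 * kappa (n + 1) * (b\<^sup>2 * b powr (1 - 2 * (n + 1))) * (b\<^sup>2 + u\<^sup>2) powr (-n - 1)"
      by (simp add: C_def)
    ultimately show ?thesis
      by simp
  qed
  finally show ?thesis .
qed

lemma scaled_root_of_linear_has_real_derivative:
  fixes b0 k l m :: real
  assumes "b0 > 0" "0 < 1 - k * l" "m > 0"
  shows "((\<lambda>t. b0 * (1 - k * t) powr (1 / m)) has_real_derivative
           - (b0 powr m * k) / (m * (b0 * (1 - k * l) powr (1 / m)) powr (m - 1))) (at l)"
proof -
  define G where "G = 1 - k * l"
  have "G > 0"
    using assms(2) by (simp add: G_def)
  have root_power: "(b0 * G powr (1 / m)) powr (m - 1) = b0 powr (m - 1) * G powr ((m - 1) / m)"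
    using assms(1) \<open>G > 0\<close> by (simp add: powr_mult powr_powr)
  have G_power: "G powr (1 / m - 1) = 1 / G powr ((m - 1) / m)"
    using assms(3) powr_minus_divide[of G "(m - 1) / m"] by (simp add: diff_divide_distrib)
  have b0_power: "b0 powr m = b0 * b0 powr (m - 1)"
    using assms(1) powr_mult_base[of b0 "m - 1"] by simp
  have "b0 * (1 / m * G powr (1 / m - 1) * (- k))
      = - (b0 powr m * k) / (m * (b0 * G powr (1 / m)) powr (m - 1))"
    unfolding root_power G_power b0_power using assms(1) \<open>G > 0\<close> by (simp add: field_simps)
  then show ?thesis
    unfolding G_def using assms(2) by (auto intro!: derivative_eq_intros simp: mult_ac)
qed

lemma power_of_square_plus_square_flow:
  fixes n a b0 l u :: real
  defines "k \<equiv> (2 * n + 1) * kappa (n + 1) * a / (2 * b0 powr (2 * n + 1))"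
  defines "\<beta> \<equiv> \<lambda>t. b0 * (1 - k * t) powr (1 / (2 * n + 1))"
  assumes "n > 0" "b0 > 0" "0 < 1 - k * l"
  shows "((\<lambda>t. a * ((\<beta> t)\<^sup>2 + u\<^sup>2) powr (-n)) has_real_derivative
           star_self (\<lambda>x. a * ((\<beta> l)\<^sup>2 + x\<^sup>2) powr (-n)) u) (at l)"
proof -
  define B where "B = \<beta> l"
  have "B > 0"
    using assms(4,5) by (simp add: B_def \<beta>_def)
  have "2 * n + 1 > 0"
    using assms(3) by simp
  then have rate: "b0 powr (2 * n + 1) * k / (2 * n + 1) = kappa (n + 1) * a / 2"
    using assms(4) unfolding k_def by (simp add: divide_simps)
  have "(\<beta> has_real_derivative - (b0 powr (2 * n + 1) * k / (2 * n + 1)) / B powr (2 * n)) (at l)"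
    using scaled_root_of_linear_has_real_derivative[OF assms(4,5) \<open>2 * n + 1 > 0\<close>]
    by (simp add: \<beta>_def B_def)
  then have d\<beta>: "(\<beta> has_real_derivative - (kappa (n + 1) * a / 2) / B powr (2 * n)) (at l)"
    unfolding rate .
  have "((\<lambda>y. a * (u\<^sup>2 + y\<^sup>2) powr (-n)) has_real_derivative a * (-2 * n * B * (u\<^sup>2 + B\<^sup>2) powr (-n - 1))) (at B)"
    using \<open>B > 0\<close> by (intro DERIV_cmult has_real_derivative_plus_square_powr) (simp add: add_nonneg_pos)
  then have "((\<lambda>y. a * (y\<^sup>2 + u\<^sup>2) powr (-n)) has_real_derivative a * (-2 * n * B * (B\<^sup>2 + u\<^sup>2) powr (-n - 1))) (at B)"
    by (simp add: add.commute)
  from DERIV_chain2[OF this[unfolded B_def] d\<beta>[unfolded B_def]]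
  show ?thesis
  proof (rule DERIV_cong)
    have "(B\<^sup>2 + u\<^sup>2) powr (-n - 1) = 1 / (B\<^sup>2 + u\<^sup>2) powr (n + 1)"
      using powr_minus_divide[of "B\<^sup>2 + u\<^sup>2" "n + 1"] by simp
    moreover have "B powr (2 * n) = B * B powr (2 * n - 1)"
      using \<open>B > 0\<close> powr_mult_base[of B "2 * n - 1"] by simp
    moreover have "star_self (\<lambda>x. a * (B\<^sup>2 + x\<^sup>2) powr (-n)) u
        = n * a\<^sup>2 * kappa (n + 1) / (B powr (2 * n - 1) * (B\<^sup>2 + u\<^sup>2) powr (n + 1))"
      by (rule star_self_power_of_square_plus_square[OF assms(3) \<open>B > 0\<close>])
    ultimately show "a * (-2 * n * \<beta> l * ((\<beta> l)\<^sup>2 + u\<^sup>2) powr (-n - 1)) * (- (kappa (n + 1) * a / 2) / \<beta> l powr (2 * n))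
        = star_self (\<lambda>x. a * ((\<beta> l)\<^sup>2 + x\<^sup>2) powr (-n)) u"
      using \<open>B > 0\<close> unfolding B_def[symmetric] by (simp add: power2_eq_square mult_ac)
  qed
qed

theorem mainTheorem7:
  fixes n a :: real
  assumes "n > 0"
  shows "(\<forall>b u. b > 0 \<longrightarrow>
            star_self (\<lambda>x. a * (b\<^sup>2 + x\<^sup>2) powr (-n)) u
              = n * a\<^sup>2 * kappa (n + 1) / (b powr (2 * n - 1) * (b\<^sup>2 + u\<^sup>2) powr (n + 1)))
       \<and> (\<forall>b0. b0 > 0 \<longrightarrow>
            (let bl = (\<lambda>l. b0 * (1 - (2 * n + 1) * kappa (n + 1) * a * l / (2 * b0 powr (2 * n + 1)))
                                 powr (1 / (2 * n + 1)));
                 fl = (\<lambda>l x. a * ((bl l)\<^sup>2 + x\<^sup>2) powr (-n))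
             in (\<forall>x. fl 0 x = a * (b0\<^sup>2 + x\<^sup>2) powr (-n))
              \<and> (\<forall>l u. 1 - (2 * n + 1) * kappa (n + 1) * a * l / (2 * b0 powr (2 * n + 1)) > 0 \<longrightarrow>
                   ((\<lambda>m. fl m u) has_real_derivative star_self (fl l) u) (at l))))"
  unfolding Let_def
  using star_self_power_of_square_plus_square[OF assms] power_of_square_plus_square_flow[OF assms]
  by simp

end
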